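(* Let $L\ge18$ with $L\equiv 12\pmod{24}$. Then $M_S(L,3)\le (L-4)/8$.
   Context: $\mathcal{P}(L,\omega)$ is the set of $\omega$-element subsets of $\mathbb{Z}_L$. For $\mathcal{I}\in\mathcal{P}(L,\omega)$: $d(\mathcal{I})=\{a-b \bmod L: a,b\in\mathcal{I}\}$, $d^*(\mathcal{I})=d(\mathcal{I})\setminus\{0\}$. A strongly conflict-avoiding code (SCAC) of length $L$ and weight $\omega$ is a set $\mathcal{C}=\{\mathcal{I}_1,\dots,\mathcal{I}_M\}\subseteq\mathcal{P}(L,\omega)$ such that for all $j\ne k$, $\big(d^*(\mathcal{I}_j)\cup(d^*(\mathcal{I}_j)+1)\cup(d^*(\mathcal{I}_j)-1)\big)\cap d(\mathcal{I}_k)=\emptyset$ (shifts mod $L$). $M_S(L,\omega)$ denotes the maximum number of codewords in an SCAC of length $L$ and weight $\omega$. *)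

theory Defs
  imports Complex_Main
begin

text \<open>Z_L is modelled by {0..<L} with arithmetic mod L.\<close>

definition P_set :: "nat \<Rightarrow> nat \<Rightarrow> nat set set" where
  "P_set L w = {I. I \<subseteq> {0..<L} \<and> card I = w}"

definition dset :: "nat \<Rightarrow> nat set \<Rightarrow> nat set" where
  "dset L I = {(a + L - b) mod L | a b. a \<in> I \<and> b \<in> I}"

definition dstar :: "nat \<Rightarrow> nat set \<Rightarrow> nat set" where
  "dstar L I = dset L I - {0}"

definition is_SCAC :: "nat \<Rightarrow> nat \<Rightarrow> nat set set \<Rightarrow> bool" where
  "is_SCAC L w C \<longleftrightarrow> C \<subseteq> P_set L w \<and>
     (\<forall>J\<in>C. \<forall>K\<in>C. J \<noteq> K \<longrightarrow>
        (dstar L J \<union> (\<lambda>x. (x + 1) mod L) ` dstar L J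
                   \<union> (\<lambda>x. (x + L - 1) mod L) ` dstar L J) \<inter> dset L K = {})"

definition M_S :: "nat \<Rightarrow> nat \<Rightarrow> nat" where
  "M_S L w = Max (card ` {C. is_SCAC L w C})"

end

theory Submission
  imports Defs
begin

text \<open>
  A weight-3 codeword {a < b < c} of length L has gaps p = b - a, q = c - b,
  r = L + a - c with p + q + r = L, and its nonzero difference set is
  D = {p, q, r, p+q, q+r, r+p}.  If the code has another codeword, the SCAC
  condition excludes 1 and L - 1 from D (so p, q, r \<ge> 2), and for distinct
  codewords J, K it forbids both x = y and x = y + 1 for x \<in> D_J, y \<in> D_K.
  Hence the "thickened" sets D_J \<union> (D_J + 1) are pairwise disjoint subsets of
  {2, ..., L - 1}, and their sizes add up to at most L - 2.

  The first part of the file classifies the thickened size of D when 12 | L: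
  it is at least 8, except for the sets {L/3, 2L/3} (size 4) and
  {L/4, L/2, 3L/4} (size 6); each of these can occur for at most one codeword.
  Recording this with a weight (size plus a bonus of 4 resp. 2) gives
  8 M \<le> L - 2 + 6.  To gain the missing unit when L \<equiv> 12 (mod 24) we show
  that equality forces all difference sets to be free of consecutive integers,
  which is impossible because the odd element L/4 would then have to sit in a
  perfect alternating pattern starting at 2.  The counting is carried out in
  a locale for an SCAC with at least two codewords; the theorem follows.
\<close>

definition diffs :: "nat \<Rightarrow> nat \<Rightarrow> nat \<Rightarrow> nat set" where
  "diffs p q r = {p, q, r, p + q, q + r, r + p}"

definition thicken :: "nat set \<Rightarrow> nat set" where
  "thicken S = S \<union> Suc ` S"

definition nonadjacent :: "nat set \<Rightarrow> bool" where
  "nonadjacent S \<longleftrightarrow> S \<inter> Suc ` S = {}"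

text \<open>The two exceptional difference sets, of the codewords {0, L/3, 2L/3} and
  {0, L/4, L/2}, and the weight correcting for their small thickened size.\<close>
definition Aset :: "nat \<Rightarrow> nat set" where
  "Aset L = {L div 3, 2 * (L div 3)}"

definition Bset :: "nat \<Rightarrow> nat set" where
  "Bset L = {L div 4, 2 * (L div 4), 3 * (L div 4)}"

definition weight :: "nat \<Rightarrow> nat set \<Rightarrow> nat" where
  "weight L S = card (thicken S) + (if S = Aset L then 4 else 0) + (if S = Bset L then 2 else 0)"

definition admissible :: "nat \<Rightarrow> nat set \<Rightarrow> bool" where
  "admissible L S \<longleftrightarrow> 8 \<le> weight L S \<and> (weight L S = 8 \<longrightarrow> nonadjacent S \<or> L div 3 \<in> S)"

lemma card_ge_strictly_sorted:
  fixes xs :: "'a::linorder list"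
  assumes "sorted_wrt (<) xs" "set xs \<subseteq> A" "finite A"
  shows "length xs \<le> card A"
proof -
  have "length xs = card (set xs)" using assms(1) by (metis distinct_card strict_sorted_iff)
  also have "\<dots> \<le> card A" using assms(2,3) by (rule card_mono[rotated])
  finally show ?thesis .
qed

lemma diffs_perm: "diffs p q r = diffs q p r" "diffs p q r = diffs p r q"
  unfolding diffs_def by auto

text \<open>A multiple of d leaves no nonzero remainder; this rules out coincidences among
  differences whenever they would force L into a wrong residue class.\<close>
lemma no_residue:
  fixes d n c x :: nat
  assumes "d dvd n" "0 < c" "c < d"
  shows "n \<noteq> d * x + c"
proof
  assume "n = d * x + c"
  hence "d dvd c" using assms(1) by (simp add: dvd_add_right_iff)
  thus False using assms(2,3) by (auto dest: dvd_imp_le)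
qed

lemma card_thicken_nonadjacent:
  assumes "finite S" "nonadjacent S"
  shows "card (thicken S) = 2 * card S"
  using assms by (simp add: thicken_def nonadjacent_def card_Un_disjoint card_image)

lemma admissible_large:
  assumes "9 \<le> card (thicken S)"
  shows "admissible L S"
  using assms by (simp add: admissible_def weight_def)

lemma admissible_nonadjacent:
  assumes "finite S" "nonadjacent S" "4 \<le> card S"
  shows "admissible L S"
  using assms card_thicken_nonadjacent[OF assms(1,2)] by (simp add: admissible_def weight_def)

lemma admissible_contains_third:
  assumes "8 \<le> card (thicken S)" "L div 3 \<in> S"
  shows "admissible L S"
  using assms by (simp add: admissible_def weight_def)

lemma admissible_equal:
  assumes "2 \<le> p" "3 * p = L"
  shows "admissible L (diffs p p p)"
proof -
  have "L div 3 = p" using assms by simp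
  hence S: "diffs p p p = Aset L" by (auto simp: diffs_def Aset_def)
  have na: "nonadjacent (diffs p p p)" using assms by (auto simp: diffs_def nonadjacent_def)
  have "length [p, p+1, 2*p, 2*p+1] \<le> card (thicken (diffs p p p))"
    by (rule card_ge_strictly_sorted) (use assms in \<open>auto simp: thicken_def diffs_def\<close>)
  thus ?thesis using S na by (simp add: admissible_def weight_def)
qed

text \<open>Gaps (p, p, r): the exceptional set {L/4, L/2, 3L/4} when r = 2p, otherwise four
  pairwise non-consecutive differences (3 | L and 2 | L rule out coincidences).\<close>
lemma admissible_double:
  assumes "2 \<le> p" "p < r" "2 * p + r = L" "12 dvd L"
  shows "admissible L (diffs p p r)"
proof (cases "r = 2 * p")
  case True
  have "L div 4 = p" using assms True by simp
  hence S: "diffs p p r = Bset L" using True by (auto simp: diffs_def Bset_def)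
  have na: "nonadjacent (diffs p p r)" using assms True by (auto simp: diffs_def nonadjacent_def)
  have "length [p, p+1, 2*p, 2*p+1, 3*p, 3*p+1] \<le> card (thicken (diffs p p r))"
    by (rule card_ge_strictly_sorted) (use assms True in \<open>auto simp: thicken_def diffs_def\<close>)
  thus ?thesis using S na by (simp add: admissible_def weight_def)
next
  case False
  have S: "diffs p p r = {p, r, 2*p, p+r}" by (auto simp: diffs_def)
  have "3 dvd L" "2 dvd L" using assms(4) dvd_trans[of 3 12 L] dvd_trans[of 2 12 L] by simp_all
  hence "r \<noteq> p + 1" "r \<noteq> 2 * p + 1" "r + 1 \<noteq> 2 * p"
    using no_residue[of 3 L 1 p] no_residue[of 2 L 1 "2*p"] no_residue[of 2 L 1 r] assms(3)
    by linarith+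
  hence "nonadjacent (diffs p p r)" using assms unfolding S nonadjacent_def by auto
  moreover have "card (diffs p p r) = 4" using assms False unfolding S by simp
  ultimately show ?thesis by (intro admissible_nonadjacent) (auto simp: diffs_def)
qed

lemma admissible_pair_top:
  assumes "2 \<le> p" "p < q" "p + 2 * q = L" "12 dvd L"
  shows "admissible L (diffs p q q)"
proof -
  have S: "diffs p q q = {p, q, p+q, 2*q}" by (auto simp: diffs_def)
  have "3 dvd L" using assms(4) dvd_trans[of 3 12 L] by simp
  hence "q \<noteq> p + 1" using no_residue[of 3 L 2 p] assms(3) by linarith
  hence "nonadjacent (diffs p q q)" using assms unfolding S nonadjacent_def by auto
  moreover have "card (diffs p q q) = 4" using assms unfolding S by simp
  ultimately show ?thesis by (intro admissible_nonadjacent) (auto simp: diffs_def)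
qed

text \<open>Distinct gaps with r < p + q: six differences; the thickening has 9 elements
  unless q = p + 1 and r = p + 2, where L/3 = q is a difference.\<close>
lemma admissible_acute:
  assumes "2 \<le> p" "p < q" "q < r" "r < p + q" "p + q + r = L" "12 dvd L"
  shows "admissible L (diffs p q r)"
proof -
  have "2 dvd L" using assms(6) dvd_trans[of 2 12 L] by simp
  hence "r + 1 < p + q" using no_residue[of 2 L 1 r] assms(4,5) by linarith
  consider "q \<noteq> p + 1" | "q = p + 1" "r \<noteq> q + 1" | "q = p + 1" "r = q + 1" by blast
  thus ?thesis
  proof cases
    case 1
    have "length [p, p+1, q, r, r+1, p+q, p+r, q+r, q+r+1] \<le> card (thicken (diffs p q r))"
      by (rule card_ge_strictly_sorted)
        (use assms 1 \<open>r + 1 < p + q\<close> in \<open>auto simp: thicken_def diffs_def\<close>)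
    thus ?thesis by (intro admissible_large) simp
  next
    case 2
    have "length [p, q, q+1, r, r+1, p+q, p+r, q+r, q+r+1] \<le> card (thicken (diffs p q r))"
      by (rule card_ge_strictly_sorted)
        (use assms 2 \<open>r + 1 < p + q\<close> in \<open>auto simp: thicken_def diffs_def\<close>)
    thus ?thesis by (intro admissible_large) simp
  next
    case 3
    have "length [p, q, r, r+1, p+q, p+r, q+r, q+r+1] \<le> card (thicken (diffs p q r))"
      by (rule card_ge_strictly_sorted)
        (use assms \<open>r + 1 < p + q\<close> in \<open>auto simp: thicken_def diffs_def\<close>)
    moreover have "L div 3 = q" using assms(5) 3 by simp
    ultimately show ?thesis by (intro admissible_contains_third) (auto simp: diffs_def)
  qed
qed

text \<open>Distinct gaps with r = p + q: five differences, and 4 | L keeps q \<noteq> p + 1.\<close>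
lemma admissible_degenerate:
  assumes "2 \<le> p" "p < q" "r = p + q" "p + q + r = L" "12 dvd L"
  shows "admissible L (diffs p q r)"
proof -
  have "4 dvd L" using assms(5) dvd_trans[of 4 12 L] by simp
  hence "p + 1 < q" using no_residue[of 4 L 2 p] assms by linarith
  have "length [p, q, q+1, p+q, p+q+1, 2*p+q, 2*p+q+1, p+2*q, p+2*q+1]
      \<le> card (thicken (diffs p q r))"
    by (rule card_ge_strictly_sorted)
      (use assms \<open>p + 1 < q\<close> in \<open>auto simp: thicken_def diffs_def\<close>)
  thus ?thesis by (intro admissible_large) simp
qed

text \<open>Distinct gaps with r > p + q: six differences, and parity keeps r \<noteq> p + q + 1.\<close>
lemma admissible_obtuse:
  assumes "2 \<le> p" "p < q" "p + q < r" "p + q + r = L" "12 dvd L"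
  shows "admissible L (diffs p q r)"
proof -
  have "2 dvd L" using assms(5) dvd_trans[of 2 12 L] by simp
  hence "p + q + 1 < r" using no_residue[of 2 L 1 "p+q"] assms(3,4) by fastforce
  have "length [p, q, q+1, p+q, p+q+1, r, p+r, q+r, q+r+1] \<le> card (thicken (diffs p q r))"
    by (rule card_ge_strictly_sorted)
      (use assms \<open>p + q + 1 < r\<close> in \<open>auto simp: thicken_def diffs_def\<close>)
  thus ?thesis by (intro admissible_large) simp
qed

lemma admissible_sorted:
  assumes "2 \<le> p" "p \<le> q" "q \<le> r" "p + q + r = L" "12 dvd L"
  shows "admissible L (diffs p q r)"
proof -
  consider "p = q" "q = r" | "p = q" "q < r" | "p < q" "q = r"
    | "p < q" "q < r" "r < p + q" | "p < q" "q < r" "r = p + q" | "p < q" "q < r" "p + q < r"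
    using assms(2,3) by linarith
  thus ?thesis
  proof cases
    case 1 thus ?thesis using admissible_equal[of p L] assms by simp
  next
    case 2 thus ?thesis using admissible_double[of p r L] assms by simp
  next
    case 3 thus ?thesis using admissible_pair_top[of p q L] assms by simp
  next
    case 4 thus ?thesis using admissible_acute[of p q r L] assms by simp
  next
    case 5 thus ?thesis using admissible_degenerate[of p q r L] assms by simp
  next
    case 6 thus ?thesis using admissible_obtuse[of p q r L] assms by simp
  qed
qed

lemma admissible_diffs:
  assumes "2 \<le> p" "2 \<le> q" "2 \<le> r" "p + q + r = L" "12 dvd L"
  shows "admissible L (diffs p q r)"
proof -
  have sorted: "admissible L (diffs x y z)"
    if "x \<le> y" "y \<le> z" "{x, y, z} = {p, q, r}" "x + y + z = L" for x y z
  proof -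
    have "x \<in> {p, q, r}" using that(3) by blast
    hence "2 \<le> x" using assms(1-3) by auto
    thus ?thesis using admissible_sorted[of x y z L] that(1,2,4) assms(5) by simp
  qed
  consider "p \<le> q" "q \<le> r" | "p \<le> r" "r \<le> q" | "q \<le> p" "p \<le> r"
    | "q \<le> r" "r \<le> p" | "r \<le> p" "p \<le> q" | "r \<le> q" "q \<le> p"
    by linarith
  thus ?thesis
    by cases (use sorted[of p q r] sorted[of p r q] sorted[of q p r] sorted[of q r p]
        sorted[of r p q] sorted[of r q p] diffs_perm assms(4) in \<open>auto simp: ac_simps\<close>)
qed

lemma three_element_sorted:
  fixes J :: "nat set"
  assumes "card J = 3"
  obtains a b c where "a < b" "b < c" "J = {a, b, c}"
proof -
  have "finite J" using assms by (intro card_ge_0_finite) simp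
  define xs where "xs = sorted_list_of_set J"
  have xs: "sorted_wrt (<) xs" "set xs = J" "length xs = 3"
    using \<open>finite J\<close> assms by (simp_all add: xs_def)
  then obtain a b c where "xs = [a, b, c]" by (auto simp: numeral_3_eq_3 length_Suc_conv)
  thus ?thesis using xs that by auto
qed

lemma dstar_triple:
  assumes "a < b" "b < c" "c < L"
  shows "dstar L {a, b, c} = diffs (b - a) (c - b) (L + a - c)"
proof -
  have pairs: "{a, b, c} \<times> {a, b, c}
      = {(a, a), (a, b), (a, c), (b, a), (b, b), (b, c), (c, a), (c, b), (c, c)}" by auto
  have dset: "dset L {a, b, c} = (\<lambda>(x, y). (x + L - y) mod L) ` ({a, b, c} \<times> {a, b, c})"
    unfolding dset_def by force
  have "(b + L - a) mod L = b - a" "(a + L - b) mod L = (c - b) + (L + a - c)"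
    "(c + L - a) mod L = (b - a) + (c - b)" "(a + L - c) mod L = L + a - c"
    "(c + L - b) mod L = c - b" "(b + L - c) mod L = (L + a - c) + (b - a)"
    using assms by (auto simp: mod_if)
  hence "dset L {a, b, c} = insert 0 (diffs (b - a) (c - b) (L + a - c))"
    unfolding dset pairs diffs_def by (simp add: insert_commute)
  moreover have "0 \<notin> diffs (b - a) (c - b) (L + a - c)" using assms by (simp add: diffs_def)
  ultimately show ?thesis by (simp add: dstar_def)
qed

lemma codeword_gaps:
  assumes "J \<in> P_set L 3"
  obtains p q r where "0 < p" "0 < q" "0 < r" "p + q + r = L" "dstar L J = diffs p q r"
proof -
  have J: "J \<subseteq> {0..<L}" "card J = 3" using assms by (auto simp: P_set_def)
  obtain a b c where abc: "a < b" "b < c" "J = {a, b, c}" using three_element_sorted[OF J(2)] .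
  hence "c < L" using J(1) by auto
  show ?thesis
    by (rule that[of "b - a" "c - b" "L + a - c"]) (use abc \<open>c < L\<close> dstar_triple in auto)
qed

lemma nonadjacent_interval_bound:
  assumes "finite X" "X \<subseteq> {a..<b}" "nonadjacent X"
  shows "2 * card X \<le> b - a + 1"
proof -
  have "thicken X \<subseteq> {a..<b + 1}" using assms(2) by (auto simp: thicken_def)
  hence "card (thicken X) \<le> b + 1 - a" using card_mono[of "{a..<b + 1}"] by simp
  thus ?thesis using card_thicken_nonadjacent[OF assms(1,3)] by linarith
qed

lemma nonadjacent_interval_odd_offset:
  assumes "finite X" "X \<subseteq> {a..<b}" "nonadjacent X" "t \<in> X" "odd (t - a)"
  shows "2 * card X \<le> b - a"
proof -
  have "a \<le> t" "t \<noteq> a" "t < b" using assms(2,4,5) by auto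
  hence t: "a < t" "t < b" by simp_all
  have no_cross: "Suc x \<notin> X" if "x \<in> X" for x
    using assms(3) that by (auto simp: nonadjacent_def)
  have "t - 1 \<notin> X" using no_cross[of "t - 1"] assms(4) t(1) by auto
  have "t + 1 \<notin> X" using no_cross[OF assms(4)] by simp
  define X1 where "X1 = X \<inter> {a..<t - 1}"
  define X2 where "X2 = X \<inter> {t + 2..<b}"
  have "X \<subseteq> X1 \<union> {t} \<union> X2"
  proof
    fix x assume x: "x \<in> X"
    hence "a \<le> x" "x < b" "x \<noteq> t - 1" "x \<noteq> t + 1"
      using assms(2) \<open>t - 1 \<notin> X\<close> \<open>t + 1 \<notin> X\<close> by auto
    hence "x \<in> {a..<t - 1} \<or> x = t \<or> x \<in> {t + 2..<b}" by auto
    thus "x \<in> X1 \<union> {t} \<union> X2" using x by (auto simp: X1_def X2_def)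
  qed
  hence "card X \<le> card (X1 \<union> {t} \<union> X2)"
    by (rule card_mono[rotated]) (simp add: X1_def X2_def)
  also have "\<dots> \<le> card X1 + 1 + card X2"
    using card_Un_le[of "X1 \<union> {t}" X2] card_Un_le[of X1 "{t}"] by simp
  finally have X: "card X \<le> card X1 + 1 + card X2" .
  have "2 * card X1 \<le> t - 1 - a + 1"
    by (rule nonadjacent_interval_bound) (use assms(1,3) in \<open>auto simp: X1_def nonadjacent_def\<close>)
  hence X1: "2 * card X1 \<le> t - a - 1" using assms(5) by presburger
  have "2 * card X2 \<le> b - (t + 2) + 1"
    by (rule nonadjacent_interval_bound) (use assms(1,3) in \<open>auto simp: X2_def nonadjacent_def\<close>)
  hence X2: "2 * card X2 \<le> b - t - 1" using t(2) by presburger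
  show ?thesis using X X1 X2 t by linarith
qed

lemma residue_12_mod_24:
  fixes L :: nat
  assumes "L mod 24 = 12"
  obtains k where "L = 24 * k + 12" "12 dvd L" "L div 3 = 8 * k + 4" "L div 4 = 6 * k + 3"
proof -
  define k where "k = L div 24"
  have L: "L = 24 * k + 12" using div_mult_mod_eq[of L 24] assms unfolding k_def by linarith
  have "L = 12 * (2 * k + 1)" "L = 3 * (8 * k + 4)" "L = 4 * (6 * k + 3)" using L by simp_all
  hence "12 dvd L" "L div 3 = 8 * k + 4" "L div 4 = 6 * k + 3" by simp_all
  from L this show ?thesis by (rule that)
qed

locale scac3 =
  fixes L :: nat and C :: "nat set set"
  assumes scac: "is_SCAC L 3 C" and two_codewords: "2 \<le> card C"
begin

lemma finite_code: "finite C"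
  using two_codewords by (intro card_ge_0_finite) simp

lemma codeword: "J \<in> C \<Longrightarrow> J \<in> P_set L 3"
  using scac by (auto simp: is_SCAC_def)

lemma other_codeword:
  assumes "J \<in> C"
  obtains K where "K \<in> C" "K \<noteq> J"
proof -
  have "\<not> C \<subseteq> {J}" using two_codewords card_mono[of "{J}" C] by auto
  thus ?thesis using that by blast
qed

lemma length_ge_3: "3 \<le> L"
proof -
  obtain J where "J \<in> C" using two_codewords by fastforce
  hence "J \<subseteq> {0..<L}" "card J = 3" using codeword by (auto simp: P_set_def)
  thus ?thesis using card_mono[of "{0..<L}" J] by simp
qed

lemma avoid:
  assumes "J \<in> C" "K \<in> C" "J \<noteq> K"
  shows "(dstar L J \<union> (\<lambda>x. (x + 1) mod L) ` dstar L J
           \<union> (\<lambda>x. (x + L - 1) mod L) ` dstar L J) \<inter> dset L K = {}"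
  using scac assms by (auto simp: is_SCAC_def)

lemma separated:
  assumes "J \<in> C" "K \<in> C" "J \<noteq> K" "x \<in> dstar L J" "y \<in> dstar L K"
  shows "x \<noteq> y \<and> x \<noteq> Suc y"
proof
  show "x \<noteq> y" using avoid[OF assms(1-3)] assms(4,5) by (auto simp: dstar_def)
  have "x < L" using assms(4) length_ge_3 by (auto simp: dstar_def dset_def)
  show "x \<noteq> Suc y"
  proof
    assume "x = Suc y"
    hence "x \<in> (\<lambda>x. (x + 1) mod L) ` dstar L K" using \<open>x < L\<close> assms(5) by force
    thus False using avoid[OF assms(2,1)] assms(3,4) by (auto simp: dstar_def)
  qed
qed

text \<open>Since every codeword difference set contains 0, no codeword has the differences 1
  or L - 1; thus all gaps are at least 2.\<close>
lemma no_unit_difference: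
  assumes "J \<in> C"
  shows "1 \<notin> dstar L J" "L - 1 \<notin> dstar L J"
proof -
  obtain K where K: "K \<in> C" "K \<noteq> J" using other_codeword[OF assms] .
  have "K \<noteq> {}" using codeword[OF K(1)] by (auto simp: P_set_def)
  hence zero: "0 \<in> dset L K" by (force simp: dset_def)
  have "(1 + L - 1) mod L = 0" "(L - 1 + 1) mod L = 0" using length_ge_3 by simp_all
  thus "1 \<notin> dstar L J" "L - 1 \<notin> dstar L J"
    using avoid[OF assms K(1) K(2)[symmetric]] zero by (auto simp: image_iff)
qed

lemma difference_gaps:
  assumes "J \<in> C"
  obtains p q r where "2 \<le> p" "2 \<le> q" "2 \<le> r" "p + q + r = L" "dstar L J = diffs p q r"
proof -
  obtain p q r where pqr: "0 < p" "0 < q" "0 < r" "p + q + r = L" "dstar L J = diffs p q r"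
    using codeword_gaps[OF codeword[OF assms]] .
  have "p \<noteq> 1" "q \<noteq> 1" "r \<noteq> 1"
    using no_unit_difference[OF assms] pqr(5) by (auto simp: diffs_def)
  hence "2 \<le> p" "2 \<le> q" "2 \<le> r" using pqr(1-3) by auto
  thus ?thesis using that pqr(4,5) by blast
qed

lemma dstar_range:
  assumes "J \<in> C"
  shows "dstar L J \<subseteq> {2..<L - 1}"
proof
  fix x assume x: "x \<in> dstar L J"
  hence "x < L" "x \<noteq> 0" using length_ge_3 by (auto simp: dstar_def dset_def)
  moreover have "x \<noteq> 1" "x \<noteq> L - 1" using no_unit_difference[OF assms] x by auto
  ultimately show "x \<in> {2..<L - 1}" by simp
qed

lemma finite_dstar: "J \<in> C \<Longrightarrow> finite (dstar L J)"
  using dstar_range finite_subset by blast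

lemma codeword_admissible:
  assumes "J \<in> C" "12 dvd L"
  shows "admissible L (dstar L J)"
proof -
  obtain p q r where "2 \<le> p" "2 \<le> q" "2 \<le> r" "p + q + r = L" "dstar L J = diffs p q r"
    using difference_gaps[OF assms(1)] .
  thus ?thesis using admissible_diffs assms(2) by simp
qed

lemma shared_difference:
  assumes "J \<in> C" "K \<in> C" "x \<in> dstar L J" "x \<in> dstar L K"
  shows "J = K"
  using separated[OF assms(1,2) _ assms(3,4)] by blast

lemma at_most_one_with_dstar:
  assumes "S \<noteq> {}"
  shows "card {J \<in> C. dstar L J = S} \<le> 1"
proof -
  obtain x where "x \<in> S" using assms by blast
  hence "\<forall>J\<in>{J \<in> C. dstar L J = S}. \<forall>K\<in>{J \<in> C. dstar L J = S}. J = K"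
    using shared_difference by blast
  thus ?thesis using card_le_Suc0_iff_eq[of "{J \<in> C. dstar L J = S}"] finite_code by simp
qed

lemma thicken_range: "J \<in> C \<Longrightarrow> thicken (dstar L J) \<subseteq> {2..<L}"
  using dstar_range[of J] unfolding thicken_def by force

lemma thicken_disjoint:
  assumes "J \<in> C" "K \<in> C" "J \<noteq> K"
  shows "thicken (dstar L J) \<inter> thicken (dstar L K) = {}"
proof -
  have "x \<noteq> y \<and> x \<noteq> Suc y \<and> y \<noteq> Suc x" if "x \<in> dstar L J" "y \<in> dstar L K" for x y
    using separated[OF assms] separated[OF assms(2,1) assms(3)[symmetric]] that by blast
  thus ?thesis unfolding thicken_def by blast
qed

lemma card_union_thicken: "card (\<Union>J\<in>C. thicken (dstar L J)) = (\<Sum>J\<in>C. card (thicken (dstar L J)))"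
  using finite_code finite_dstar thicken_disjoint
  by (intro card_UN_disjoint) (auto simp: thicken_def)

lemma sum_card_thicken: "(\<Sum>J\<in>C. card (thicken (dstar L J))) \<le> L - 2"
proof -
  have "(\<Union>J\<in>C. thicken (dstar L J)) \<subseteq> {2..<L}" using thicken_range by blast
  hence "card (\<Union>J\<in>C. thicken (dstar L J)) \<le> card {2..<L}" by (intro card_mono) auto
  thus ?thesis using card_union_thicken by simp
qed

lemma sum_weight:
  "(\<Sum>J\<in>C. weight L (dstar L J)) = (\<Sum>J\<in>C. card (thicken (dstar L J)))
     + 4 * card {J \<in> C. dstar L J = Aset L} + 2 * card {J \<in> C. dstar L J = Bset L}"
  using finite_code by (simp add: weight_def sum.distrib sum.If_cases Int_def)

text \<open>In the extremal configuration (both exceptional codewords present, all weights 8)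
  the union of all difference sets has no consecutive elements and contains the odd
  number L/4, which saves two positions of {2, ..., L - 1}.\<close>
lemma tight_configuration:
  assumes L: "L mod 24 = 12"
    and A: "JA \<in> C" "dstar L JA = Aset L" and B: "JB \<in> C" "dstar L JB = Bset L"
    and tight: "\<forall>J\<in>C. weight L (dstar L J) = 8"
  shows "(\<Sum>J\<in>C. card (thicken (dstar L J))) \<le> L - 4"
proof -
  obtain k where k: "L = 24 * k + 12" "12 dvd L" "L div 3 = 8 * k + 4" "L div 4 = 6 * k + 3"
    using residue_12_mod_24[OF L] .
  hence "nonadjacent (Aset L)" by (auto simp: Aset_def nonadjacent_def)
  have nonadj: "nonadjacent (dstar L J)" if J: "J \<in> C" for J
  proof -
    have "nonadjacent (dstar L J) \<or> L div 3 \<in> dstar L J"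
      using codeword_admissible[OF J k(2)] tight J by (simp add: admissible_def)
    moreover have "J = JA" if "L div 3 \<in> dstar L J"
      using shared_difference[OF J A(1) that] A(2) by (simp add: Aset_def)
    ultimately show ?thesis using A(2) \<open>nonadjacent (Aset L)\<close> by auto
  qed
  define U where "U = (\<Union>J\<in>C. dstar L J)"
  have U: "finite U" "U \<subseteq> {2..<L - 1}"
    using finite_code finite_dstar dstar_range by (auto simp: U_def)
  have "nonadjacent U" using nonadj separated unfolding nonadjacent_def U_def by blast
  have "L div 4 \<in> U" using B by (auto simp: U_def Bset_def)
  moreover have "odd (L div 4 - 2)" using k(4) by simp
  ultimately have "2 * card U \<le> L - 1 - 2"
    using nonadjacent_interval_odd_offset[OF U \<open>nonadjacent U\<close>] by blast
  hence "card U < 12 * k + 5" using k(1) by linarith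
  moreover have "(\<Union>J\<in>C. thicken (dstar L J)) = thicken U" by (auto simp: U_def thicken_def)
  hence "(\<Sum>J\<in>C. card (thicken (dstar L J))) = 2 * card U"
    using card_union_thicken card_thicken_nonadjacent[OF U(1) \<open>nonadjacent U\<close>] by simp
  ultimately show ?thesis using k(1) by linarith
qed

lemma codeword_weight: "J \<in> C \<Longrightarrow> 12 dvd L \<Longrightarrow> 8 \<le> weight L (dstar L J)"
  using codeword_admissible by (simp add: admissible_def)

lemma sum_weight_lower:
  assumes "12 dvd L"
  shows "8 * card C \<le> (\<Sum>J\<in>C. weight L (dstar L J))"
proof -
  have "(\<Sum>J\<in>C. 8::nat) \<le> (\<Sum>J\<in>C. weight L (dstar L J))"
    using codeword_weight assms by (intro sum_mono)
  thus ?thesis by simp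
qed

lemma sum_weight_strict:
  assumes "12 dvd L" "J \<in> C" "weight L (dstar L J) \<noteq> 8"
  shows "8 * card C < (\<Sum>J\<in>C. weight L (dstar L J))"
proof -
  have "8 < weight L (dstar L J)" using codeword_weight[OF assms(2,1)] assms(3) by simp
  hence "(\<Sum>J\<in>C. 8::nat) < (\<Sum>J\<in>C. weight L (dstar L J))"
    using finite_code codeword_weight assms(1,2) by (intro sum_strict_mono_ex1) auto
  thus ?thesis by simp
qed

text \<open>The weighted count: total weight is at most L - 2 plus the bonuses (at most
  4 + 2), and the extremal case loses two more by the tight configuration.\<close>
lemma weighted_count:
  assumes L: "L mod 24 = 12"
  shows "8 * card C \<le> L + 3"
proof -
  define F where "F = (\<Sum>J\<in>C. card (thicken (dstar L J)))"
  define CA where "CA = {J \<in> C. dstar L J = Aset L}"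
  define CB where "CB = {J \<in> C. dstar L J = Bset L}"
  have "12 dvd L" using residue_12_mod_24[OF L] by blast
  have total: "(\<Sum>J\<in>C. weight L (dstar L J)) = F + 4 * card CA + 2 * card CB"
    unfolding F_def CA_def CB_def by (rule sum_weight)
  have "card CA \<le> 1" "card CB \<le> 1"
    unfolding CA_def CB_def by (rule at_most_one_with_dstar, simp add: Aset_def Bset_def)+
  have "F \<le> L - 2" unfolding F_def by (rule sum_card_thicken)
  show ?thesis
  proof (cases "\<forall>J\<in>C. weight L (dstar L J) = 8")
    case all8: True
    show ?thesis
    proof (cases "card CA = 1 \<and> card CB = 1")
      case True
      then obtain JA JB where "CA = {JA}" "CB = {JB}" using card_1_singletonE by metis
      hence "JA \<in> CA" "JB \<in> CB" by simp_all
      hence JA: "JA \<in> C" "dstar L JA = Aset L" and JB: "JB \<in> C" "dstar L JB = Bset L"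
        by (simp_all add: CA_def CB_def)
      have "F \<le> L - 4" unfolding F_def using tight_configuration[OF L JA JB all8] .
      thus ?thesis using total sum_weight_lower[OF \<open>12 dvd L\<close>] True length_ge_3 by simp
    next
      case False
      hence "4 * card CA + 2 * card CB \<le> 4"
        using \<open>card CA \<le> 1\<close> \<open>card CB \<le> 1\<close> by (cases "card CA = 1"; linarith)
      thus ?thesis using total sum_weight_lower[OF \<open>12 dvd L\<close>] \<open>F \<le> L - 2\<close> length_ge_3
        by linarith
    qed
  next
    case False
    then obtain J where "J \<in> C" "weight L (dstar L J) \<noteq> 8" by blast
    thus ?thesis using sum_weight_strict[OF \<open>12 dvd L\<close>] total \<open>F \<le> L - 2\<close>
        \<open>card CA \<le> 1\<close> \<open>card CB \<le> 1\<close> length_ge_3 by fastforce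
  qed
qed

text \<open>Since 8 | L + 4, the weighted count rounds down to the claimed bound.\<close>
lemma card_bound:
  assumes L: "L mod 24 = 12"
  shows "8 * card C + 4 \<le> L"
proof -
  obtain k where k: "L = 24 * k + 12" using residue_12_mod_24[OF L] by blast
  have "card C < 3 * k + 2" using weighted_count[OF L] k by linarith
  thus ?thesis using k by linarith
qed

end

text \<open>The maximum defining M_S is attained: the SCACs of given length and weight form a
  finite family containing the empty code.\<close>
lemma M_S_attained:
  obtains C where "is_SCAC L w C" "M_S L w = card C"
proof -
  define S where "S = {C. is_SCAC L w C}"
  have "P_set L w \<subseteq> Pow {0..<L}" by (auto simp: P_set_def)
  hence "finite (P_set L w)" by (rule finite_subset) simp
  moreover have "S \<subseteq> Pow (P_set L w)" by (auto simp: S_def is_SCAC_def)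
  ultimately have "finite (card ` S)" by (simp add: finite_subset)
  moreover have "{} \<in> S" by (simp add: S_def is_SCAC_def)
  ultimately have "Max (card ` S) \<in> card ` S" by (intro Max_in) auto
  moreover have "M_S L w = Max (card ` S)" unfolding S_def M_S_def by (rule refl)
  ultimately show ?thesis using that by (auto simp: S_def)
qed

theorem mainTheorem7:
  fixes L :: nat
  assumes "L \<ge> 18" and "L mod 24 = 12"
  shows "real (M_S L 3) \<le> (real L - 4) / 8"
proof -
  obtain C where C: "is_SCAC L 3 C" "M_S L 3 = card C" by (rule M_S_attained)
  have "8 * card C + 4 \<le> L"
  proof (cases "2 \<le> card C")
    case True
    with C(1) have "scac3 L C" by (simp add: scac3_def)
    thus ?thesis using assms(2) by (rule scac3.card_bound)
  next
    case False
    thus ?thesis using assms(1) by linarith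
  qed
  thus ?thesis using C(2) by simp
qed

end
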